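(* Let $\Gamma$ be a finite multiset of formulas and $A$ a formula. If $\Gamma \vdash_c A$ and $(\mathcal{V}^-(\Gamma) \cup \mathcal{V}^+(A)) \cap (\mathcal{V}^+_{ns}(\Gamma) \cup \mathcal{V}^-(A)) = \emptyset$, then $\Gamma \vdash_i A$.
   Context: Formulas are built from propositional variables and $\bot$ using $\land$, $\lor$, $\to$; $\lnot A$ abbreviates $A \to \bot$. $\vdash_c$ and $\vdash_i$ denote derivability in classical and intuitionistic propositional logic respectively. The sets $\mathcal{V}^+(A)$, $\mathcal{V}^-(A)$ of variables occurring positively, negatively in $A$ are defined simultaneously by: $\mathcal{V}^+(p)=\{p\}$, $\mathcal{V}^+(\bot)=\emptyset$, $\mathcal{V}^+(A\land B)=\mathcal{V}^+(A\lor B)=\mathcal{V}^+(A)\cup\mathcal{V}^+(B)$, $\mathcal{V}^+(A\to B)=\mathcal{V}^-(A)\cup\mathcal{V}^+(B)$; $\mathcal{V}^-(p)=\mathcal{V}^-(\bot)=\emptyset$, $\mathcal{V}^-(A\land B)=\mathcal{V}^-(A\lor B)=\mathcal{V}^-(A)\cup\mathcal{V}^-(B)$, $\mathcal{V}^-(A\to B)=\mathcal{V}^+(A)\cup\mathcal{V}^-(B)$. The set $\mathcal{V}^+_{ns}(A)$ of variables occurring non-strictly positively is defined by $\mathcal{V}^+_{ns}(p)=\mathcal{V}^+_{ns}(\bot)=\emptyset$, $\mathcal{V}^+_{ns}(A\land B)=\mathcal{V}^+_{ns}(A\lor B)=\mathcal{V}^+_{ns}(A)\cup\mathcal{V}^+_{ns}(B)$,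 $\mathcal{V}^+_{ns}(A\to B)=\mathcal{V}^-(A)\cup\mathcal{V}^+_{ns}(B)$. For a finite multiset $\Gamma$, $\mathcal{V}^+(\Gamma)=\bigcup_{A\in\Gamma}\mathcal{V}^+(A)$, and similarly for $\mathcal{V}^-$ and $\mathcal{V}^+_{ns}$. *)

theory Defs
  imports Main "HOL-Library.Multiset"
begin

datatype 'a form =
    Var 'a
  | Bot
  | Conj "'a form" "'a form"
  | Disj "'a form" "'a form"
  | Imp "'a form" "'a form"

definition Neg :: "'a form \<Rightarrow> 'a form" where
  "Neg A = Imp A Bot"

fun Vpos :: "'a form \<Rightarrow> 'a set" and Vneg :: "'a form \<Rightarrow> 'a set" where
  "Vpos (Var p) = {p}"
| "Vpos Bot = {}"
| "Vpos (Conj A B) = Vpos A \<union> Vpos B"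
| "Vpos (Disj A B) = Vpos A \<union> Vpos B"
| "Vpos (Imp A B) = Vneg A \<union> Vpos B"
| "Vneg (Var p) = {}"
| "Vneg Bot = {}"
| "Vneg (Conj A B) = Vneg A \<union> Vneg B"
| "Vneg (Disj A B) = Vneg A \<union> Vneg B"
| "Vneg (Imp A B) = Vpos A \<union> Vneg B"

fun Vpos_ns :: "'a form \<Rightarrow> 'a set" where
  "Vpos_ns (Var p) = {}"
| "Vpos_ns Bot = {}"
| "Vpos_ns (Conj A B) = Vpos_ns A \<union> Vpos_ns B"
| "Vpos_ns (Disj A B) = Vpos_ns A \<union> Vpos_ns B"
| "Vpos_ns (Imp A B) = Vneg A \<union> Vpos_ns B"

definition VposM :: "'a form multiset \<Rightarrow> 'a set" where
  "VposM \<Gamma> = (\<Union>A\<in>set_mset \<Gamma>. Vpos A)"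
definition VnegM :: "'a form multiset \<Rightarrow> 'a set" where
  "VnegM \<Gamma> = (\<Union>A\<in>set_mset \<Gamma>. Vneg A)"
definition Vpos_nsM :: "'a form multiset \<Rightarrow> 'a set" where
  "Vpos_nsM \<Gamma> = (\<Union>A\<in>set_mset \<Gamma>. Vpos_ns A)"

inductive nd :: "bool \<Rightarrow> 'a form multiset \<Rightarrow> 'a form \<Rightarrow> bool" where
  Ax: "A \<in># \<Gamma> \<Longrightarrow> nd c \<Gamma> A"
| BotE: "nd c \<Gamma> Bot \<Longrightarrow> nd c \<Gamma> A"
| ConjI: "nd c \<Gamma> A \<Longrightarrow> nd c \<Gamma> B \<Longrightarrow> nd c \<Gamma> (Conj A B)"
| ConjE1: "nd c \<Gamma> (Conj A B) \<Longrightarrow> nd c \<Gamma> A"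
| ConjE2: "nd c \<Gamma> (Conj A B) \<Longrightarrow> nd c \<Gamma> B"
| DisjI1: "nd c \<Gamma> A \<Longrightarrow> nd c \<Gamma> (Disj A B)"
| DisjI2: "nd c \<Gamma> B \<Longrightarrow> nd c \<Gamma> (Disj A B)"
| DisjE: "nd c \<Gamma> (Disj A B) \<Longrightarrow> nd c (add_mset A \<Gamma>) C \<Longrightarrow>
           nd c (add_mset B \<Gamma>) C \<Longrightarrow> nd c \<Gamma> C"
| ImpI: "nd c (add_mset A \<Gamma>) B \<Longrightarrow> nd c \<Gamma> (Imp A B)"
| ImpE: "nd c \<Gamma> (Imp A B) \<Longrightarrow> nd c \<Gamma> A \<Longrightarrow> nd c \<Gamma> B"
| RAA: "nd True (add_mset (Neg A) \<Gamma>) Bot \<Longrightarrow> nd True \<Gamma> A"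

abbreviation derives_c :: "'a form multiset \<Rightarrow> 'a form \<Rightarrow> bool" where
  "derives_c \<Gamma> A \<equiv> nd True \<Gamma> A"
abbreviation derives_i :: "'a form multiset \<Rightarrow> 'a form \<Rightarrow> bool" where
  "derives_i \<Gamma> A \<equiv> nd False \<Gamma> A"

end

theory Submission
  imports Defs
begin

text \<open>A classical derivation of \<open>\<Gamma> \<turnstile> A\<close> makes the sequent \<open>\<Gamma> \<Rightarrow> A\<close> classically valid. Such a
  sequent is decomposed by the multi-succedent rules of intuitionistic sequent calculus, all of
  which except implication-right are classically invertible. Implication-right is applied only
  once the antecedent consists of atoms: if valuations \<open>v\<^sub>1\<close> and \<open>v\<^sub>2\<close> refuted \<open>\<Gamma>, B \<Rightarrow> C\<close> and
  \<open>\<Gamma> \<Rightarrow> \<Delta>\<close>, then the valuation that is \<open>v\<^sub>1 \<or> v\<^sub>2\<close> on the variables occurring negatively in the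
  succedent and \<open>v\<^sub>1 \<and> v\<^sub>2\<close> elsewhere would refute \<open>\<Gamma> \<Rightarrow> B \<rightarrow> C, \<Delta>\<close>, since no variable occurs
  both positively and negatively in the succedent. The polarity condition survives every
  decomposition step (implication-left moves the premise of a hypothesis into the succedent,
  which is why non-strictly positive occurrences in \<open>\<Gamma>\<close> are constrained), and valid atomic
  sequents are axioms.\<close>

lemma nd_mono: "nd c \<Gamma> A \<Longrightarrow> set_mset \<Gamma> \<subseteq> set_mset \<Gamma>' \<Longrightarrow> nd c \<Gamma>' A"
proof (induction arbitrary: \<Gamma>' rule: nd.induct)
  case (DisjE c \<Gamma> A B C)
  then show ?case by (metis nd.DisjE insert_mono set_mset_add_mset_insert)
next
  case (ImpI c A \<Gamma> B)
  then show ?case by (metis nd.ImpI insert_mono set_mset_add_mset_insert)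
next
  case (RAA A \<Gamma>)
  then show ?case by (metis nd.RAA insert_mono set_mset_add_mset_insert)
qed (auto intro: nd.intros)

lemma nd_cut:
  assumes "nd c \<Gamma> A" "nd c (add_mset A \<Sigma>) B" "set_mset \<Sigma> \<subseteq> set_mset \<Gamma>"
  shows "nd c \<Gamma> B"
proof -
  have "nd c (add_mset A \<Gamma>) B" by (rule nd_mono[OF assms(2)]) (use assms(3) in auto)
  then show ?thesis by (meson assms(1) nd.ImpI nd.ImpE)
qed

text \<open>The intuitionistic reading of the multi-succedent sequent \<open>\<Gamma> \<Rightarrow> \<Delta>\<close>: \<open>\<Gamma> \<turnstile> \<Or>\<Delta>\<close>, phrased by
  its disjunction-elimination property so that no disjunction over a multiset is needed, and
  closed under extending \<open>\<Gamma>\<close> so that the left rules can add hypotheses.\<close>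

definition int_seq :: "'a form multiset \<Rightarrow> 'a form multiset \<Rightarrow> bool" where
  "int_seq \<Gamma> \<Delta> \<longleftrightarrow> (\<forall>\<Sigma> E. set_mset \<Gamma> \<subseteq> set_mset \<Sigma> \<longrightarrow>
     (\<forall>D\<in>#\<Delta>. nd False (add_mset D \<Sigma>) E) \<longrightarrow> nd False \<Sigma> E)"

lemma int_seqD:
  assumes "int_seq \<Gamma> \<Delta>" "set_mset \<Gamma> \<subseteq> set_mset \<Sigma>'" "set_mset \<Sigma> \<subseteq> set_mset \<Sigma>'"
    and "\<forall>D\<in>#\<Delta>. nd False (add_mset D \<Sigma>) E"
  shows "nd False \<Sigma>' E"
proof -
  have "nd False (add_mset D \<Sigma>') E" if "D \<in># \<Delta>" for D
    by (rule nd_mono[where \<Gamma>="add_mset D \<Sigma>"]) (use assms(3,4) that in auto)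
  then show ?thesis using assms(1,2) unfolding int_seq_def by blast
qed

lemma int_seq_of_nd: "nd False \<Gamma> A \<Longrightarrow> A \<in># \<Delta> \<Longrightarrow> int_seq \<Gamma> \<Delta>"
  unfolding int_seq_def by (metis nd_cut nd_mono subset_refl)

lemma int_seq_single: "int_seq \<Gamma> {#A#} \<longleftrightarrow> nd False \<Gamma> A"
proof
  assume "int_seq \<Gamma> {#A#}"
  then show "nd False \<Gamma> A" by (rule int_seqD[where \<Sigma>=\<Gamma>]) (auto intro: nd.Ax)
qed (simp add: int_seq_of_nd)

lemma int_seq_weakenR: "int_seq \<Gamma> \<Delta> \<Longrightarrow> \<Delta> \<subseteq># \<Delta>' \<Longrightarrow> int_seq \<Gamma> \<Delta>'"
  unfolding int_seq_def by (meson mset_subset_eqD)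

lemma int_seq_BotL: "Bot \<in># \<Gamma> \<Longrightarrow> int_seq \<Gamma> \<Delta>"
  unfolding int_seq_def by (meson in_mono nd.Ax nd.BotE)

lemma int_seq_ConjL:
  assumes "int_seq (add_mset B (add_mset C \<Gamma>)) \<Delta>"
  shows "int_seq (add_mset (Conj B C) \<Gamma>) \<Delta>"
  unfolding int_seq_def
proof (intro allI impI)
  fix \<Sigma> E
  assume sub: "set_mset (add_mset (Conj B C) \<Gamma>) \<subseteq> set_mset \<Sigma>"
    and E: "\<forall>D\<in>#\<Delta>. nd False (add_mset D \<Sigma>) E"
  have "nd False \<Sigma> B" "nd False \<Sigma> C"
    using sub by (auto intro: nd.ConjE1[of _ _ _ C] nd.ConjE2[of _ _ B] nd.Ax)
  moreover have "nd False (add_mset B (add_mset C \<Sigma>)) E"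
    by (rule int_seqD[OF assms _ _ E]) (use sub in auto)
  ultimately show "nd False \<Sigma> E"
    by (metis nd_cut nd_mono set_mset_add_mset_insert subset_insertI subset_refl)
qed

lemma int_seq_DisjL:
  assumes "int_seq (add_mset B \<Gamma>) \<Delta>" and "int_seq (add_mset C \<Gamma>) \<Delta>"
  shows "int_seq (add_mset (Disj B C) \<Gamma>) \<Delta>"
  unfolding int_seq_def
proof (intro allI impI)
  fix \<Sigma> E
  assume sub: "set_mset (add_mset (Disj B C) \<Gamma>) \<subseteq> set_mset \<Sigma>"
    and E: "\<forall>D\<in>#\<Delta>. nd False (add_mset D \<Sigma>) E"
  have "nd False (add_mset B \<Sigma>) E"
    by (rule int_seqD[OF assms(1) _ _ E]) (use sub in auto)
  moreover have "nd False (add_mset C \<Sigma>) E"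
    by (rule int_seqD[OF assms(2) _ _ E]) (use sub in auto)
  ultimately show "nd False \<Sigma> E"
    using sub by (auto intro: nd.DisjE nd.Ax)
qed

lemma int_seq_ImpL:
  assumes "int_seq \<Gamma> (add_mset B \<Delta>)" and "int_seq (add_mset C \<Gamma>) \<Delta>"
  shows "int_seq (add_mset (Imp B C) \<Gamma>) \<Delta>"
  unfolding int_seq_def
proof (intro allI impI)
  fix \<Sigma> E
  assume sub: "set_mset (add_mset (Imp B C) \<Gamma>) \<subseteq> set_mset \<Sigma>"
    and E: "\<forall>D\<in>#\<Delta>. nd False (add_mset D \<Sigma>) E"
  have "nd False (add_mset C \<Sigma>) E"
    by (rule int_seqD[OF assms(2) _ _ E]) (use sub in auto)
  moreover have "nd False (add_mset B \<Sigma>) C"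
    by (rule nd.ImpE[of _ _ B]; rule nd.Ax) (use sub in auto)
  ultimately have "nd False (add_mset B \<Sigma>) E"
    by (metis nd_cut set_mset_add_mset_insert subset_insertI)
  then show "nd False \<Sigma> E"
    using int_seqD[OF assms(1), of \<Sigma> \<Sigma> E] sub E by auto
qed

lemma int_seq_ConjR:
  assumes "int_seq \<Gamma> (add_mset B \<Delta>)" and "int_seq \<Gamma> (add_mset C \<Delta>)"
  shows "int_seq \<Gamma> (add_mset (Conj B C) \<Delta>)"
  unfolding int_seq_def
proof (intro allI impI)
  fix \<Sigma> E
  assume sub: "set_mset \<Gamma> \<subseteq> set_mset \<Sigma>"
    and E: "\<forall>D\<in>#add_mset (Conj B C) \<Delta>. nd False (add_mset D \<Sigma>) E"
  have "nd False (add_mset C (add_mset B \<Sigma>)) (Conj B C)"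
    by (intro nd.ConjI nd.Ax) auto
  then have "nd False (add_mset C (add_mset B \<Sigma>)) E"
    by (rule nd_cut) (use E in auto)
  moreover have "nd False (add_mset D (add_mset B \<Sigma>)) E" if "D \<in># \<Delta>" for D
    by (rule nd_mono[where \<Gamma>="add_mset D \<Sigma>"]) (use E that in auto)
  ultimately have "nd False (add_mset B \<Sigma>) E"
    using int_seqD[OF assms(2), of "add_mset B \<Sigma>" "add_mset B \<Sigma>" E] sub by auto
  then show "nd False \<Sigma> E"
    using int_seqD[OF assms(1), of \<Sigma> \<Sigma> E] sub E by auto
qed

lemma int_seq_DisjR:
  assumes "int_seq \<Gamma> (add_mset B (add_mset C \<Delta>))"
  shows "int_seq \<Gamma> (add_mset (Disj B C) \<Delta>)"
  unfolding int_seq_def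
proof (intro allI impI)
  fix \<Sigma> E
  assume sub: "set_mset \<Gamma> \<subseteq> set_mset \<Sigma>"
    and E: "\<forall>D\<in>#add_mset (Disj B C) \<Delta>. nd False (add_mset D \<Sigma>) E"
  have "nd False (add_mset B \<Sigma>) (Disj B C)" "nd False (add_mset C \<Sigma>) (Disj B C)"
    by (intro nd.DisjI1 nd.DisjI2 nd.Ax; simp)+
  then have "nd False (add_mset B \<Sigma>) E" "nd False (add_mset C \<Sigma>) E"
    by (auto elim!: nd_cut[where \<Sigma>=\<Sigma>]) (use E in auto)
  then show "nd False \<Sigma> E"
    using int_seqD[OF assms, of \<Sigma> \<Sigma> E] sub E by auto
qed

lemma int_seq_ImpR: "int_seq (add_mset B \<Gamma>) {#C#} \<Longrightarrow> int_seq \<Gamma> (add_mset (Imp B C) \<Delta>)"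
  by (rule int_seq_of_nd[of _ "Imp B C"]) (auto simp: int_seq_single intro: nd.ImpI)

fun eval :: "('a \<Rightarrow> bool) \<Rightarrow> 'a form \<Rightarrow> bool" where
  "eval v (Var p) = v p"
| "eval v Bot = False"
| "eval v (Conj A B) = (eval v A \<and> eval v B)"
| "eval v (Disj A B) = (eval v A \<or> eval v B)"
| "eval v (Imp A B) = (eval v A \<longrightarrow> eval v B)"

lemma nd_sound: "nd c \<Gamma> A \<Longrightarrow> \<forall>F\<in>#\<Gamma>. eval v F \<Longrightarrow> eval v A"
  by (induction rule: nd.induct) (auto simp: Neg_def)

lemma eval_polarity_mono:
  assumes "\<forall>p\<in>Vpos F. u p \<longrightarrow> w p" and "\<forall>p\<in>Vneg F. w p \<longrightarrow> u p" and "eval u F"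
  shows "eval w F"
  using assms
proof (induction F arbitrary: u w)
  case (Conj B C)
  then show ?case using Conj.IH[of u w] by auto
next
  case (Disj B C)
  then show ?case using Disj.IH[of u w] by auto
next
  case (Imp B C)
  then show ?case using Imp.IH(1)[of w u] Imp.IH(2)[of u w] by auto
qed auto

definition valid_seq :: "'a form multiset \<Rightarrow> 'a form multiset \<Rightarrow> bool" where
  "valid_seq \<Gamma> \<Delta> \<longleftrightarrow> (\<forall>v. (\<forall>F\<in>#\<Gamma>. eval v F) \<longrightarrow> (\<exists>D\<in>#\<Delta>. eval v D))"

definition polarity_sep :: "'a form multiset \<Rightarrow> 'a form multiset \<Rightarrow> bool" where
  "polarity_sep \<Gamma> \<Delta> \<longleftrightarrow> (VnegM \<Gamma> \<union> VposM \<Delta>) \<inter> (Vpos_nsM \<Gamma> \<union> VnegM \<Delta>) = {}"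

lemma polarity_sets_mset_simps [simp]:
  "VposM {#} = {}" "VposM (add_mset F \<Gamma>) = Vpos F \<union> VposM \<Gamma>"
  "VnegM {#} = {}" "VnegM (add_mset F \<Gamma>) = Vneg F \<union> VnegM \<Gamma>"
  "Vpos_nsM {#} = {}" "Vpos_nsM (add_mset F \<Gamma>) = Vpos_ns F \<union> Vpos_nsM \<Gamma>"
  by (auto simp: VposM_def VnegM_def Vpos_nsM_def)

lemma Vpos_ns_subset_Vpos: "Vpos_ns F \<subseteq> Vpos F"
  by (induction F) auto

definition is_atom :: "'a form \<Rightarrow> bool" where
  "is_atom F \<longleftrightarrow> (\<exists>p. F = Var p)"

lemma valid_seq_ImpR_split:
  assumes valid: "valid_seq \<Gamma> (add_mset (Imp B C) \<Delta>)"
    and atoms: "\<forall>F\<in>#\<Gamma>. is_atom F"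
    and sep: "VposM (add_mset (Imp B C) \<Delta>) \<inter> VnegM (add_mset (Imp B C) \<Delta>) = {}"
  shows "valid_seq (add_mset B \<Gamma>) {#C#} \<or> valid_seq \<Gamma> \<Delta>"
proof (rule ccontr)
  assume "\<not> ?thesis"
  then obtain v1 v2
    where v1: "\<forall>F\<in>#\<Gamma>. eval v1 F" "eval v1 B" "\<not> eval v1 C"
      and v2: "\<forall>F\<in>#\<Gamma>. eval v2 F" "\<forall>D\<in>#\<Delta>. \<not> eval v2 D"
    unfolding valid_seq_def by auto
  define N where "N = VnegM (add_mset (Imp B C) \<Delta>)"
  \<comment> \<open>\<open>w\<close> lies above \<open>v\<^sub>1\<close> and \<open>v\<^sub>2\<close> on the negative and below them on the positive variables
    of the succedent, so it falsifies the succedent; the atoms of \<open>\<Gamma>\<close> stay true.\<close>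
  define w where "w p = (if p \<in> N then v1 p \<or> v2 p else v1 p \<and> v2 p)" for p
  have "\<forall>F\<in>#\<Gamma>. eval w F"
    using atoms v1(1) v2(1) unfolding is_atom_def by (fastforce simp: w_def)
  moreover have "eval w B"
    by (rule eval_polarity_mono[OF _ _ v1(2)]) (use sep in \<open>auto simp: w_def N_def\<close>)
  moreover have "\<not> eval w C"
  proof
    assume "eval w C"
    then have "eval v1 C"
      by (rule eval_polarity_mono[rotated 2]) (use sep in \<open>auto simp: w_def N_def\<close>)
    with v1(3) show False ..
  qed
  moreover have "\<not> eval w D" if D: "D \<in># \<Delta>" for D
  proof
    assume "eval w D"
    then have "eval v2 D"
      by (rule eval_polarity_mono[rotated 2])
        (use sep D in \<open>auto simp: w_def N_def VposM_def VnegM_def\<close>)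
    with v2(2) D show False by blast
  qed
  ultimately show False
    using valid unfolding valid_seq_def by auto
qed

text \<open>The number of symbol occurrences; counting \<open>Bot\<close> ensures that dropping it from the
  succedent decreases the measure.\<close>

definition seq_size :: "'a form multiset \<Rightarrow> 'a form multiset \<Rightarrow> nat" where
  "seq_size \<Gamma> \<Delta> = (\<Sum>F\<in>#\<Gamma> + \<Delta>. Suc (2 * size F))"

lemma seq_size_add_mset [simp]:
  "seq_size (add_mset F \<Gamma>) \<Delta> = Suc (2 * size F) + seq_size \<Gamma> \<Delta>"
  "seq_size \<Gamma> (add_mset F \<Delta>) = Suc (2 * size F) + seq_size \<Gamma> \<Delta>"
  by (simp_all add: seq_size_def)

lemma int_seq_left_step:
  fixes \<Gamma> \<Delta> :: "'a form multiset"
  assumes IH: "\<And>\<Gamma>' \<Delta>' :: 'a form multiset. seq_size \<Gamma>' \<Delta>' < seq_size (add_mset F \<Gamma>) \<Delta> \<Longrightarrow>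
      valid_seq \<Gamma>' \<Delta>' \<Longrightarrow> polarity_sep \<Gamma>' \<Delta>' \<Longrightarrow> int_seq \<Gamma>' \<Delta>'"
    and valid: "valid_seq (add_mset F \<Gamma>) \<Delta>" and sep: "polarity_sep (add_mset F \<Gamma>) \<Delta>"
    and "\<not> is_atom F"
  shows "int_seq (add_mset F \<Gamma>) \<Delta>"
proof (cases F)
  case (Var p)
  with \<open>\<not> is_atom F\<close> show ?thesis by (simp add: is_atom_def)
next
  case Bot
  then show ?thesis by (simp add: int_seq_BotL)
next
  case (Conj B C)
  show ?thesis unfolding Conj
    by (rule int_seq_ConjL, rule IH)
      (use valid sep Conj in \<open>auto simp: valid_seq_def polarity_sep_def\<close>)
next
  case (Disj B C)
  show ?thesis unfolding Disj
    by (rule int_seq_DisjL; rule IH)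
      (use valid sep Disj in \<open>auto simp: valid_seq_def polarity_sep_def\<close>)
next
  case (Imp B C)
  show ?thesis unfolding Imp
    by (rule int_seq_ImpL; rule IH)
      (use valid sep Imp in \<open>auto simp: valid_seq_def polarity_sep_def\<close>)
qed

lemma int_seq_right_step:
  fixes \<Gamma> \<Delta> :: "'a form multiset"
  assumes IH: "\<And>\<Gamma>' \<Delta>' :: 'a form multiset. seq_size \<Gamma>' \<Delta>' < seq_size \<Gamma> (add_mset F \<Delta>) \<Longrightarrow>
      valid_seq \<Gamma>' \<Delta>' \<Longrightarrow> polarity_sep \<Gamma>' \<Delta>' \<Longrightarrow> int_seq \<Gamma>' \<Delta>'"
    and valid: "valid_seq \<Gamma> (add_mset F \<Delta>)" and sep: "polarity_sep \<Gamma> (add_mset F \<Delta>)"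
    and atoms: "\<forall>G\<in>#\<Gamma>. is_atom G" and "\<not> is_atom F"
  shows "int_seq \<Gamma> (add_mset F \<Delta>)"
proof (cases F)
  case (Var p)
  with \<open>\<not> is_atom F\<close> show ?thesis by (simp add: is_atom_def)
next
  case Bot
  have "int_seq \<Gamma> \<Delta>"
    by (rule IH) (use valid sep Bot in \<open>auto simp: valid_seq_def polarity_sep_def\<close>)
  then show ?thesis by (rule int_seq_weakenR) simp
next
  case (Conj B C)
  show ?thesis unfolding Conj
    by (rule int_seq_ConjR; rule IH)
      (use valid sep Conj in \<open>auto simp: valid_seq_def polarity_sep_def\<close>)
next
  case (Disj B C)
  show ?thesis unfolding Disj
    by (rule int_seq_DisjR, rule IH)
      (use valid sep Disj in \<open>auto simp: valid_seq_def polarity_sep_def\<close>)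
next
  case (Imp B C)
  have sep': "polarity_sep (add_mset B \<Gamma>) {#C#}" "polarity_sep \<Gamma> \<Delta>"
    using sep Imp Vpos_ns_subset_Vpos[of B] by (auto simp: polarity_sep_def)
  have "valid_seq (add_mset B \<Gamma>) {#C#} \<or> valid_seq \<Gamma> \<Delta>"
    by (rule valid_seq_ImpR_split) (use valid sep atoms Imp in \<open>auto simp: polarity_sep_def\<close>)
  then show ?thesis
  proof
    assume "valid_seq (add_mset B \<Gamma>) {#C#}"
    then have "int_seq (add_mset B \<Gamma>) {#C#}"
      using sep'(1) Imp by (intro IH) (auto simp: seq_size_def)
    then show ?thesis unfolding Imp by (rule int_seq_ImpR)
  next
    assume "valid_seq \<Gamma> \<Delta>"
    then have "int_seq \<Gamma> \<Delta>" using sep'(2) by (intro IH) auto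
    then show ?thesis by (rule int_seq_weakenR) simp
  qed
qed

lemma int_seq_atomic:
  assumes "\<forall>F\<in>#\<Gamma>. is_atom F" and "\<forall>F\<in>#\<Delta>. is_atom F" and "valid_seq \<Gamma> \<Delta>"
  shows "int_seq \<Gamma> \<Delta>"
proof -
  have "eval (\<lambda>p. Var p \<in># \<Gamma>) F" if "F \<in># \<Gamma>" for F
    using assms(1) that unfolding is_atom_def by (metis eval.simps(1))
  then obtain D where D: "D \<in># \<Delta>" "eval (\<lambda>p. Var p \<in># \<Gamma>) D"
    using assms(3) unfolding valid_seq_def by blast
  with assms(2) obtain p where "D = Var p" unfolding is_atom_def by auto
  with D show ?thesis by (auto intro: int_seq_of_nd nd.Ax)
qed

lemma int_seq_complete:
  fixes \<Gamma> \<Delta> :: "'a form multiset"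
  assumes "valid_seq \<Gamma> \<Delta>" and "polarity_sep \<Gamma> \<Delta>"
  shows "int_seq \<Gamma> \<Delta>"
  using assms
proof (induction "seq_size \<Gamma> \<Delta>" arbitrary: \<Gamma> \<Delta> rule: less_induct)
  case less
  show ?case
  proof (cases "\<forall>F\<in>#\<Gamma>. is_atom F")
    case False
    then obtain F G where "\<Gamma> = add_mset F G" "\<not> is_atom F"
      by (metis multi_member_split)
    with less show ?thesis by (blast intro: int_seq_left_step)
  next
    case atoms: True
    show ?thesis
    proof (cases "\<forall>F\<in>#\<Delta>. is_atom F")
      case True
      with atoms less.prems(1) show ?thesis by (blast intro: int_seq_atomic)
    next
      case False
      then obtain F H where "\<Delta> = add_mset F H" "\<not> is_atom F"
        by (metis multi_member_split)
      with atoms less show ?thesis by (blast intro: int_seq_right_step)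
    qed
  qed
qed

theorem mainTheorem2:
  fixes \<Gamma> :: "'a form multiset" and A :: "'a form"
  assumes "derives_c \<Gamma> A"
    and "(VnegM \<Gamma> \<union> Vpos A) \<inter> (Vpos_nsM \<Gamma> \<union> Vneg A) = {}"
  shows "derives_i \<Gamma> A"
proof -
  have "valid_seq \<Gamma> {#A#}"
    using nd_sound[OF assms(1)] by (auto simp: valid_seq_def)
  moreover have "polarity_sep \<Gamma> {#A#}"
    using assms(2) by (simp add: polarity_sep_def)
  ultimately have "int_seq \<Gamma> {#A#}"
    by (rule int_seq_complete)
  then show ?thesis
    by (simp add: int_seq_single)
qed

end
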